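(* Under the CME setup in the context: (1) (A) implies $f_g\in\mathcal H$ for every $g\in\mathcal G$. (2) (B) implies $[f_g]\in\mathcal H_{\mathcal C}$ for every $g\in\mathcal G$. (3) (C) implies $P_{\overline{\mathcal H_{\mathcal C}}}[f_g]\in\mathcal H_{\mathcal C}$ for every $g$, where the closure is in $L^2_{\mathcal C}(\mathbb P_X)$. (4) ($^u$C) implies $P_{\overline{\mathcal H}}f_g\in\mathcal H$ for every $g$, where the closure is in $L^2(\mathbb P_X)$. (5) (A$^*$) implies $f_g\in\overline{\mathcal H}^{L^2(\mathbb P_X)}$ for every $g$. (6) (B$^*$) implies $[f_g]\in\overline{\mathcal H_{\mathcal C}}^{L^2_{\mathcal C}(\mathbb P_X)}$ for every $g$. Furthermore, (C) implies $\operatorname{ran}C_{VU}\subseteq\operatorname{ran}C_V$, and ($^u$C) implies $\operatorname{ran}{}^uC_{VU}\subseteq\operatorname{ran}{}^uC_V$.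
   Context: CME setup: - $X:\Omega\to\mathcal X$ and $Y:\Omega\to\mathcal Y$ are random variables, with $\mathcal X$ a measurable space and $\mathcal Y$ a Borel space. - $k$ and $\ell$ are measurable symmetric positive definite kernels on $\mathcal X$ and $\mathcal Y$, with separable RKHSs $\mathcal H$ and $\mathcal G$ respectively. - The feature maps are $\varphi(x)=k(x,\cdot)$, which is assumed injective, and $\psi(y)=\ell(y,\cdot)$. - $V:=\varphi(X)\in L^2(\mathbb P;\mathcal H)$ and $U:=\psi(Y)\in L^2(\mathbb P;\mathcal G)$. - For $h\in\mathcal H$: $\|h\|_{\mathcal H}=0$ iff $h=0$ $\mathbb P_X$-a.e.; so $\mathcal H$ is viewed as a subspace of $L^2(\mathbb P_X)$. - For a separable Hilbert space $\mathcal K$, $\mathcal C\subset L^2(\mathbb P_X;\mathcal K)$ is the subspace of $\mathbb P_X$-a.e. constant functions, and $L^2_{\mathcal C}(\mathbb P_X;\mathcal K):=L^2(\mathbb P_X;\mathcal K)/\mathcal C$, with inner product $\langle[f_1],[f_2]\rangle=\langle f_1-\mathbb E f_1(X),f_2-\mathbb E f_2(X)\rangle_{L^2(\mathbb P_X;\mathcal K)}$. For a subspace $\mathcal U$, $\mathcal U_{\mathcal C}:=\mathcal U/(\mathcal U\cap\mathcal C)$. When $\mathcal K=\mathbb R$ we write $L^2_{\mathcal C}(\mathbb P_X)$. - $\mathfrak m(x):=\mathbb E[U|X=x]$, a version of the conditional mean in $L^2(\mathbb P_X;\mathcal G)$, and $f_g(x):=\langle g,\mathfrak m(x)\rangle_{\mathcal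 G}$ for $g\in\mathcal G$. - The Hilbert tensor product $\mathcal G\otimes\mathcal H$ is identified with functions $\mathcal X\to\mathcal G$ via $(g\otimes h)(x)=h(x)g$; thus $\mathcal G\otimes\mathcal H\subseteq L^2(\mathbb P_X;\mathcal G)$. It is also identified with Hilbert–Schmidt operators $\mathcal H\to\mathcal G$ via $(g\otimes h)(h')=\langle h,h'\rangle g$. - Assumptions (projections are orthogonal): (A) $\mathfrak m\in\mathcal G\otimes\mathcal H$; (B) $[\mathfrak m]\in(\mathcal G\otimes\mathcal H)_{\mathcal C}$; (C) $P_{\overline{(\mathcal G\otimes\mathcal H)_{\mathcal C}}}[\mathfrak m]\in(\mathcal G\otimes\mathcal H)_{\mathcal C}$, with closure in $L^2_{\mathcal C}(\mathbb P_X;\mathcal G)$; ($^u$C) $P_{\overline{\mathcal G\otimes\mathcal H}}\mathfrak m\in\mathcal G\otimes\mathcal H$, with closure in $L^2(\mathbb P_X;\mathcal G)$; (A$^*$) $\mathfrak m\in\overline{\mathcal G\otimes\mathcal H}^{L^2(\mathbb P_X;\mathcal G)}$; (B$^*$) $[\mathfrak m]\in\overline{(\mathcal G\otimes\mathcal H)_{\mathcal C}}^{L^2_{\mathcal C}(\mathbb P_X;\mathcal G)}$. - Centred covariances: $C_{VU}=\mathbb E[(V-\mu_V)\otimes(U-\mu_U)]$ and $C_V=C_{VV}$. Uncentred covariances: ${}^uC_{VU}=\mathbb E[V\otimes U]$ and ${}^uC_V=\mathbb E[V\otimes V]$. *)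

theory Defs
  imports "HOL-Probability.Probability"
begin

text \<open>Hilbert spaces are modelled as types of sort real_inner, banach, second_countable_topology
  (second countability = separability). An RKHS is represented by its feature map
  phi :: 'x => 'h; an element h of the RKHS is identified with the function x |-> h \<bullet> phi x.\<close>

definition cme_hilbert_schmidt :: "('h::real_inner \<Rightarrow> 'g::real_normed_vector) \<Rightarrow> bool" where
  "cme_hilbert_schmidt A \<longleftrightarrow> bounded_linear A \<and>
     (\<exists>E. (\<forall>e\<in>E. norm e = 1) \<and> (\<forall>e\<in>E. \<forall>e'\<in>E. e \<noteq> e' \<longrightarrow> e \<bullet> e' = 0) \<and>
          closure (span E) = UNIV \<and> (\<lambda>e. (norm (A e))\<^sup>2) summable_on E)"

text \<open>The Hilbert tensor product G (x) H, viewed (via Hilbert--Schmidt operators H -> G)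
  as the functions x |-> A (phi x).\<close>
definition cme_tensor :: "('x \<Rightarrow> 'h::real_inner) \<Rightarrow> ('x \<Rightarrow> 'g::real_normed_vector) set" where
  "cme_tensor \<phi> = {(\<lambda>x. A (\<phi> x)) | A. cme_hilbert_schmidt A}"

definition cme_rkhs_fun :: "('x \<Rightarrow> 'h::real_inner) \<Rightarrow> ('x \<Rightarrow> real) set" where
  "cme_rkhs_fun \<phi> = {(\<lambda>x. h \<bullet> \<phi> x) | h. True}"

definition cme_L2 :: "'x measure \<Rightarrow> ('x \<Rightarrow> 'k::{banach,second_countable_topology}) set" where
  "cme_L2 P = {f. f \<in> borel_measurable P \<and> integrable P (\<lambda>x. (norm (f x))\<^sup>2)}"

definition cme_mem :: "'x measure \<Rightarrow> ('x \<Rightarrow> 'k) set \<Rightarrow> ('x \<Rightarrow> 'k) \<Rightarrow> bool" where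
  "cme_mem P S f \<longleftrightarrow> (\<exists>u\<in>S. AE x in P. f x = u x)"

text \<open>Membership of [f] in S_C = S/(S \<inter> C) inside L2_C(P) (equality a.e. up to a constant).\<close>
definition cme_memC :: "'x measure \<Rightarrow> ('x \<Rightarrow> 'k::plus) set \<Rightarrow> ('x \<Rightarrow> 'k) \<Rightarrow> bool" where
  "cme_memC P S f \<longleftrightarrow> (\<exists>u\<in>S. \<exists>c. AE x in P. f x = u x + c)"

definition cme_closure :: "'x measure \<Rightarrow> ('x \<Rightarrow> 'k::real_normed_vector) set \<Rightarrow> ('x \<Rightarrow> 'k) \<Rightarrow> bool" where
  "cme_closure P S f \<longleftrightarrow>
     (\<forall>e::real>0. \<exists>u\<in>S. (\<integral>\<^sup>+x. ennreal ((norm (f x - u x))\<^sup>2) \<partial>P) < ennreal e)"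

text \<open>[f] lies in the closure of S_C in L2_C(P), with the norm
  ||[h]||^2 = E || h - E h ||^2.\<close>
definition cme_closureC :: "'x measure \<Rightarrow> ('x \<Rightarrow> 'k::{banach,second_countable_topology}) set \<Rightarrow> ('x \<Rightarrow> 'k) \<Rightarrow> bool" where
  "cme_closureC P S f \<longleftrightarrow>
     (\<forall>e::real>0. \<exists>u\<in>S.
        (\<integral>\<^sup>+x. ennreal ((norm ((f x - u x) - (\<integral>y. (f y - u y) \<partial>P)))\<^sup>2) \<partial>P) < ennreal e)"

definition cme_proj :: "'x measure \<Rightarrow> ('x \<Rightarrow> 'k::{real_inner,banach,second_countable_topology}) set
    \<Rightarrow> ('x \<Rightarrow> 'k) \<Rightarrow> ('x \<Rightarrow> 'k) \<Rightarrow> bool" where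
  "cme_proj P S f p \<longleftrightarrow> p \<in> cme_L2 P \<and> cme_closure P S p \<and>
     (\<forall>u\<in>S. (\<integral>x. (f x - p x) \<bullet> u x \<partial>P) = 0)"

text \<open>[p] is the orthogonal projection of [f] onto the closure of S_C in L2_C(P),
  with inner product <[f1],[f2]> = E <f1 - E f1, f2 - E f2>.\<close>
definition cme_projC :: "'x measure \<Rightarrow> ('x \<Rightarrow> 'k::{real_inner,banach,second_countable_topology}) set
    \<Rightarrow> ('x \<Rightarrow> 'k) \<Rightarrow> ('x \<Rightarrow> 'k) \<Rightarrow> bool" where
  "cme_projC P S f p \<longleftrightarrow> p \<in> cme_L2 P \<and> cme_closureC P S p \<and>
     (\<forall>u\<in>S. (\<integral>x. ((f x - p x) - (\<integral>y. (f y - p y) \<partial>P)) \<bullet> (u x - (\<integral>y. u y \<partial>P)) \<partial>P) = 0)"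

definition cme_cond_mean :: "'w measure \<Rightarrow> ('w \<Rightarrow> 'x) \<Rightarrow> 'x measure \<Rightarrow> ('w \<Rightarrow> 'g::{banach,second_countable_topology})
    \<Rightarrow> ('x \<Rightarrow> 'g) \<Rightarrow> bool" where
  "cme_cond_mean M X MX U m \<longleftrightarrow> m \<in> cme_L2 (distr M MX X) \<and>
     (\<forall>A\<in>sets MX. (\<integral>\<omega>. indicator A (X \<omega>) *\<^sub>R U \<omega> \<partial>M) = (\<integral>x. indicator A x *\<^sub>R m x \<partial>distr M MX X))"

text \<open>Centred cross-covariance operator C_AB = E[(A - mu_A) (x) (B - mu_B)], acting G -> H by
  b |-> E[<B - mu_B, b> (A - mu_A)].\<close>
definition cme_cov :: "'w measure \<Rightarrow> ('w \<Rightarrow> 'h::{banach,second_countable_topology}) \<Rightarrow> ('w \<Rightarrow> 'g::{real_inner,banach,second_countable_topology}) \<Rightarrow> 'g \<Rightarrow> 'h" where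
  "cme_cov M A B b = (\<integral>\<omega>. ((B \<omega> - (\<integral>\<omega>'. B \<omega>' \<partial>M)) \<bullet> b) *\<^sub>R (A \<omega> - (\<integral>\<omega>'. A \<omega>' \<partial>M)) \<partial>M)"

text \<open>Uncentred cross-covariance operator E[A (x) B], b |-> E[<B, b> A].\<close>
definition cme_ucov :: "'w measure \<Rightarrow> ('w \<Rightarrow> 'h::{banach,second_countable_topology}) \<Rightarrow> ('w \<Rightarrow> 'g::real_inner) \<Rightarrow> 'g \<Rightarrow> 'h" where
  "cme_ucov M A B b = (\<integral>\<omega>. (B \<omega> \<bullet> b) *\<^sub>R A \<omega> \<partial>M)"

end

theory Submission
  imports Defs
begin

(* For u = A o phi in the tensor product and g in G, the functional y |-> <g, A y> has a Riesz
   representer h (expand it along an orthonormal basis of H, along which A is square summable),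
   so <g, u> = <h, phi> lies in H.  The map u |-> <g, u> is L2-bounded by norm g, and every
   rank-one function x |-> <h, phi x> g lies in the tensor product; hence membership, closure and
   orthogonality to the tensor product, centred or not, pass from m to f_g = <g, m>.
   For the ranges, the tower property gives <h, C_VU b> = E[(h(X) - E h(X)) f_b(X)]; replacing
   f_b by its projection k(X) + c onto H and discarding the constant yields <h, C_V k>, and
   likewise without centring. *)

section \<open>Orthonormal expansions and Hilbert--Schmidt operators\<close>

lemma summable_on_if_tails_small:
  fixes f :: "'a \<Rightarrow> 'b::banach"
  assumes tails: "\<And>e. e > 0 \<Longrightarrow>
    \<exists>F0. finite F0 \<and> F0 \<subseteq> A \<and> (\<forall>D. finite D \<longrightarrow> D \<subseteq> A - F0 \<longrightarrow> norm (sum f D) < e)"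
  shows "f summable_on A"
proof -
  have "\<exists>P. eventually P (finite_subsets_at_top A) \<and>
      (\<forall>F F'. P F \<and> P F' \<longrightarrow> dist (sum f F) (sum f F') < e)" if "e > 0" for e
  proof -
    obtain F0 where F0: "finite F0" "F0 \<subseteq> A"
      and small: "\<And>D. finite D \<Longrightarrow> D \<subseteq> A - F0 \<Longrightarrow> norm (sum f D) < e / 2"
      using tails[of "e / 2"] \<open>e > 0\<close> by auto
    define P where "P F \<longleftrightarrow> finite F \<and> F0 \<subseteq> F \<and> F \<subseteq> A" for F
    have "eventually P (finite_subsets_at_top A)"
      unfolding eventually_finite_subsets_at_top P_def using F0 by blast
    moreover have "dist (sum f F) (sum f F') < e" if "P F" "P F'" for F F'
    proof -
      have "sum f F = sum f (F - F0) + sum f F0" "sum f F' = sum f (F' - F0) + sum f F0"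
        using that unfolding P_def by (auto intro: sum.subset_diff)
      then have "dist (sum f F) (sum f F') \<le> norm (sum f (F - F0)) + norm (sum f (F' - F0))"
        by (simp add: dist_norm norm_triangle_ineq4)
      also have "\<dots> < e / 2 + e / 2"
        using that unfolding P_def by (intro add_strict_mono small) auto
      finally show ?thesis by simp
    qed
    ultimately show ?thesis by blast
  qed
  then have "cauchy_filter (filtermap (sum f) (finite_subsets_at_top A))"
    by (simp add: cauchy_filter_metric_filtermap)
  moreover have "Topological_Spaces.complete (UNIV :: 'b set)"
    by (meson Cauchy_convergent UNIV_I complete_def convergent_def)
  ultimately obtain L where "(sum f \<longlongrightarrow> L) (finite_subsets_at_top A)"
    using complete_uniform[where S=UNIV] by (force simp add: filterlim_def)
  then show ?thesis
    unfolding summable_on_def has_sum_def by blast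
qed

lemma summable_on_if_norm_sum_square_le:
  fixes f :: "'a \<Rightarrow> 'b::banach" and g :: "'a \<Rightarrow> real"
  assumes "g summable_on A" and bound: "\<And>D. finite D \<Longrightarrow> D \<subseteq> A \<Longrightarrow> (norm (sum f D))\<^sup>2 \<le> sum g D"
  shows "f summable_on A"
proof (rule summable_on_if_tails_small)
  fix e :: real
  assume "e > 0"
  from assms(1) obtain L where "(sum g \<longlongrightarrow> L) (finite_subsets_at_top A)"
    unfolding summable_on_def has_sum_def by blast
  then have "eventually (\<lambda>F. dist (sum g F) L < e\<^sup>2 / 2) (finite_subsets_at_top A)"
    by (rule tendstoD) (use \<open>e > 0\<close> in simp)
  then obtain F0 where F0: "finite F0" "F0 \<subseteq> A"
    and close: "\<And>F. finite F \<and> F0 \<subseteq> F \<and> F \<subseteq> A \<Longrightarrow> dist (sum g F) L < e\<^sup>2 / 2"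
    by atomize_elim (simp add: eventually_finite_subsets_at_top)
  have "norm (sum f D) < e" if D: "finite D" "D \<subseteq> A - F0" for D
  proof -
    have "sum g (F0 \<union> D) = sum g F0 + sum g D"
      using F0(1) D by (intro sum.union_disjoint) auto
    moreover have "dist (sum g (F0 \<union> D)) L < e\<^sup>2 / 2" "dist (sum g F0) L < e\<^sup>2 / 2"
      using F0 D by (blast intro: close)+
    ultimately have "sum g D < e\<^sup>2"
      unfolding dist_real_def by linarith
    moreover have "(norm (sum f D))\<^sup>2 \<le> sum g D"
      using D by (intro bound) auto
    ultimately have "(norm (sum f D))\<^sup>2 < e\<^sup>2"
      by linarith
    then show ?thesis
      using \<open>e > 0\<close> by (auto intro: power2_less_imp_less)
  qed
  then show "\<exists>F0. finite F0 \<and> F0 \<subseteq> A \<and> (\<forall>D. finite D \<longrightarrow> D \<subseteq> A - F0 \<longrightarrow> norm (sum f D) < e)"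
    using F0 by blast
qed

definition orthonormal :: "'a::real_inner set \<Rightarrow> bool" where
  "orthonormal E \<longleftrightarrow> (\<forall>e\<in>E. norm e = 1) \<and> (\<forall>e\<in>E. \<forall>e'\<in>E. e \<noteq> e' \<longrightarrow> e \<bullet> e' = 0)"

lemma orthonormal_inner_self: "orthonormal E \<Longrightarrow> e \<in> E \<Longrightarrow> e \<bullet> e = 1"
  unfolding orthonormal_def by (metis power2_norm_eq_inner one_power2)

lemma norm_sum_orthonormal_square:
  assumes "orthonormal E" "finite D" "D \<subseteq> E"
  shows "(norm (\<Sum>e\<in>D. c e *\<^sub>R e))\<^sup>2 = (\<Sum>e\<in>D. (c e)\<^sup>2)"
proof -
  have "(norm (\<Sum>e\<in>D. c e *\<^sub>R e))\<^sup>2 = (\<Sum>e\<in>D. (norm (c e *\<^sub>R e))\<^sup>2)"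
    using assms unfolding orthonormal_def
    by (intro norm_sum_Pythagorean) (auto simp: pairwise_def orthogonal_def subset_iff)
  also have "\<dots> = (\<Sum>e\<in>D. (c e)\<^sup>2)"
    using assms unfolding orthonormal_def by (intro sum.cong) (auto simp: subset_iff)
  finally show ?thesis .
qed

lemma bessel_inequality:
  assumes "orthonormal E" "finite D" "D \<subseteq> E"
  shows "(\<Sum>e\<in>D. (h \<bullet> e)\<^sup>2) \<le> (norm h)\<^sup>2"
proof -
  define s where "s = (\<Sum>e\<in>D. (h \<bullet> e) *\<^sub>R e)"
  have "h \<bullet> s = (\<Sum>e\<in>D. (h \<bullet> e)\<^sup>2)"
    unfolding s_def by (simp add: inner_sum_right power2_eq_square)
  moreover have "(norm s)\<^sup>2 = (\<Sum>e\<in>D. (h \<bullet> e)\<^sup>2)"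
    unfolding s_def by (rule norm_sum_orthonormal_square[OF assms])
  moreover have "0 \<le> (norm (h - s))\<^sup>2" by simp
  then have "0 \<le> (norm h)\<^sup>2 - 2 * (h \<bullet> s) + (norm s)\<^sup>2"
    by (simp add: power2_norm_eq_inner inner_diff_left inner_diff_right inner_commute)
  ultimately show ?thesis by simp
qed

lemma orthonormal_series_summable:
  fixes E :: "'a::{real_inner,banach} set"
  assumes "orthonormal E" "(\<lambda>e. (c e)\<^sup>2) summable_on E"
  shows "(\<lambda>e. c e *\<^sub>R e) summable_on E"
proof (rule summable_on_if_norm_sum_square_le[where g="\<lambda>e. (c e)\<^sup>2"])
  show "(norm (\<Sum>e\<in>D. c e *\<^sub>R e))\<^sup>2 \<le> (\<Sum>e\<in>D. (c e)\<^sup>2)" if "finite D" "D \<subseteq> E" for D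
    using norm_sum_orthonormal_square[OF assms(1) that] by simp
qed (use assms(2) in simp_all)

lemma orthonormal_series_inner:
  assumes "orthonormal E" "((\<lambda>e. c e *\<^sub>R e) has_sum h) E" "e' \<in> E"
  shows "h \<bullet> e' = c e'"
proof -
  have "((\<lambda>e. (c e *\<^sub>R e) \<bullet> e') has_sum (h \<bullet> e')) E"
    by (rule has_sum_bounded_linear[OF bounded_linear_inner_left assms(2)])
  moreover have vanish: "(c e *\<^sub>R e) \<bullet> e' = 0" if "e \<in> E - {e'}" for e
    using assms(1,3) that unfolding orthonormal_def by simp
  have "((\<lambda>e. (c e *\<^sub>R e) \<bullet> e') has_sum c e') E \<longleftrightarrow> ((\<lambda>e. (c e *\<^sub>R e) \<bullet> e') has_sum c e') {e'}"
    by (rule has_sum_cong_neutral) (use vanish assms(3) in auto)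
  moreover have "((\<lambda>e. (c e *\<^sub>R e) \<bullet> e') has_sum c e') {e'}"
    using orthonormal_inner_self[OF assms(1,3)] by (intro has_sum_finiteI) simp_all
  ultimately show ?thesis using has_sum_unique by blast
qed

lemma hilbert_schmidt_bounded_linear: "cme_hilbert_schmidt A \<Longrightarrow> bounded_linear A"
  unfolding cme_hilbert_schmidt_def by simp

lemma hilbert_schmidt_basis:
  assumes "cme_hilbert_schmidt A"
  obtains E where "orthonormal E" "closure (span E) = UNIV" "(\<lambda>e. (norm (A e))\<^sup>2) summable_on E"
  using assms that unfolding cme_hilbert_schmidt_def orthonormal_def by auto

lemma continuous_linear_eq_on_closure_span:
  fixes f g :: "'a::real_normed_vector \<Rightarrow> 'b::real_normed_vector"
  assumes f: "bounded_linear f" and g: "bounded_linear g" and eq: "\<And>e. e \<in> E \<Longrightarrow> f e = g e"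
    and dense: "closure (span E) = UNIV"
  shows "f y = g y"
proof -
  have "f y = g y" if "y \<in> span E" for y
    by (rule linear_eq_on_span[OF bounded_linear.linear[OF f] bounded_linear.linear[OF g] eq that])
  then have "span E \<subseteq> {y. f y = g y}" by blast
  moreover have "closed {y. f y = g y}"
    by (rule closed_Collect_eq[OF linear_continuous_on[OF f] linear_continuous_on[OF g]])
  ultimately have "closure (span E) \<subseteq> {y. f y = g y}"
    by (rule closure_minimal)
  then show ?thesis using dense by auto
qed

text \<open>The Riesz representer is \<open>\<Sum>e\<in>E. (g \<bullet> A e) *\<^sub>R e\<close>, summed over the orthonormal
  basis \<open>E\<close> that comes with \<open>A\<close>.\<close>
lemma hilbert_schmidt_inner_representation:
  fixes A :: "'h::{real_inner,banach} \<Rightarrow> 'g::real_inner"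
  assumes "cme_hilbert_schmidt A"
  shows "\<exists>h. \<forall>y. g \<bullet> A y = h \<bullet> y"
proof -
  obtain E where E: "orthonormal E" "closure (span E) = UNIV"
    and A_summable: "(\<lambda>e. (norm (A e))\<^sup>2) summable_on E"
    using assms by (rule hilbert_schmidt_basis)
  have A: "bounded_linear A" using assms by (rule hilbert_schmidt_bounded_linear)
  have "(\<lambda>e. (g \<bullet> A e)\<^sup>2) summable_on E"
  proof (rule summable_on_comparison_test)
    show "(\<lambda>e. (norm g)\<^sup>2 * (norm (A e))\<^sup>2) summable_on E"
      using A_summable by (rule summable_on_cmult_right)
    show "(g \<bullet> A e)\<^sup>2 \<le> (norm g)\<^sup>2 * (norm (A e))\<^sup>2" for e
      using power_mono[OF Cauchy_Schwarz_ineq2[of g "A e"] abs_ge_zero, of 2]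
      by (simp add: power_mult_distrib)
  qed simp
  then have "(\<lambda>e. (g \<bullet> A e) *\<^sub>R e) summable_on E"
    by (rule orthonormal_series_summable[OF E(1)])
  then obtain h where h: "((\<lambda>e. (g \<bullet> A e) *\<^sub>R e) has_sum h) E"
    unfolding summable_on_def by blast
  have "g \<bullet> A y = h \<bullet> y" for y
  proof (rule continuous_linear_eq_on_closure_span[OF _ bounded_linear_inner_right _ E(2)])
    show "bounded_linear (\<lambda>y. g \<bullet> A y)"
      by (rule bounded_linear_compose[OF bounded_linear_inner_right A])
    show "g \<bullet> A e = h \<bullet> e" if "e \<in> E" for e
      using orthonormal_series_inner[OF E(1) h that] by simp
  qed
  then show ?thesis by blast
qed

text \<open>The hypothesis only provides an orthonormal basis of \<open>'h\<close>.\<close>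
lemma hilbert_schmidt_rank_one:
  fixes A :: "'h::real_inner \<Rightarrow> 'k::real_normed_vector" and h :: 'h and g :: "'g::real_normed_vector"
  assumes "cme_hilbert_schmidt A"
  shows "cme_hilbert_schmidt (\<lambda>y. (h \<bullet> y) *\<^sub>R g)"
proof -
  obtain E where E: "orthonormal E" "closure (span E) = UNIV" "(\<lambda>e. (norm (A e))\<^sup>2) summable_on E"
    using assms by (rule hilbert_schmidt_basis)
  have "x \<le> (norm h)\<^sup>2" if "x \<in> sum (\<lambda>e. (h \<bullet> e)\<^sup>2) ` {F. F \<subseteq> E \<and> finite F}" for x
  proof -
    from that obtain F where "F \<subseteq> E" "finite F" "x = (\<Sum>e\<in>F. (h \<bullet> e)\<^sup>2)"
      by blast
    then show ?thesis using bessel_inequality[OF E(1), of F h] by simp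
  qed
  then have "bdd_above (sum (\<lambda>e. (h \<bullet> e)\<^sup>2) ` {F. F \<subseteq> E \<and> finite F})"
    by (rule bdd_aboveI)
  then have "(\<lambda>e. (h \<bullet> e)\<^sup>2) summable_on E"
    by (rule nonneg_bdd_above_summable_on[rotated]) simp
  then have "(\<lambda>e. (norm g)\<^sup>2 * (h \<bullet> e)\<^sup>2) summable_on E"
    by (rule summable_on_cmult_right)
  moreover have "(norm ((h \<bullet> e) *\<^sub>R g))\<^sup>2 = (norm g)\<^sup>2 * (h \<bullet> e)\<^sup>2" for e
    by (simp add: power_mult_distrib mult.commute)
  ultimately have summable: "(\<lambda>e. (norm ((h \<bullet> e) *\<^sub>R g))\<^sup>2) summable_on E"
    by simp
  have "bounded_linear (\<lambda>y. (h \<bullet> y) *\<^sub>R g)"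
    by (rule bounded_linear_compose[OF bounded_linear_scaleR_left bounded_linear_inner_right])
  then show ?thesis
    using E(2) summable unfolding cme_hilbert_schmidt_def
    by (intro conjI exI[of _ E]) (use E(1) in \<open>simp_all add: orthonormal_def\<close>)
qed

section \<open>The tensor product and the RKHS as function spaces\<close>

lemma tensor_obtain:
  assumes "u \<in> cme_tensor \<phi>"
  obtains A where "cme_hilbert_schmidt A" "u = (\<lambda>x. A (\<phi> x))"
  using assms unfolding cme_tensor_def by blast

lemma rkhs_fun_inner [simp, intro]: "(\<lambda>x. h \<bullet> \<phi> x) \<in> cme_rkhs_fun \<phi>"
  unfolding cme_rkhs_fun_def by blast

lemma rkhs_fun_obtain:
  assumes "v \<in> cme_rkhs_fun \<phi>"
  obtains h where "v = (\<lambda>x. h \<bullet> \<phi> x)"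
  using assms unfolding cme_rkhs_fun_def by blast

lemma tensor_inner_in_rkhs_fun:
  fixes \<phi> :: "'x \<Rightarrow> 'h::{real_inner,banach}" and u :: "'x \<Rightarrow> 'g::real_inner"
  assumes "u \<in> cme_tensor \<phi>"
  shows "(\<lambda>x. g \<bullet> u x) \<in> cme_rkhs_fun \<phi>"
proof -
  obtain A where A: "cme_hilbert_schmidt A" "u = (\<lambda>x. A (\<phi> x))"
    using assms by (rule tensor_obtain)
  obtain h where "\<forall>y. g \<bullet> A y = h \<bullet> y"
    using hilbert_schmidt_inner_representation[OF A(1), of g] by blast
  then show ?thesis
    using A(2) by simp
qed

lemma tensor_rank_one:
  fixes \<phi> :: "'x \<Rightarrow> 'h::real_inner" and u :: "'x \<Rightarrow> 'k::real_normed_vector"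
    and g :: "'g::real_normed_vector"
  assumes "u \<in> cme_tensor \<phi>"
  shows "(\<lambda>x. (h \<bullet> \<phi> x) *\<^sub>R g) \<in> cme_tensor \<phi>"
proof -
  obtain A where A: "cme_hilbert_schmidt A" "u = (\<lambda>x. A (\<phi> x))"
    using assms by (rule tensor_obtain)
  have "cme_hilbert_schmidt (\<lambda>y. (h \<bullet> y) *\<^sub>R g)"
    using A(1) by (rule hilbert_schmidt_rank_one)
  then show ?thesis
    unfolding cme_tensor_def by (intro CollectI exI[where x="\<lambda>y. (h \<bullet> y) *\<^sub>R g"]) simp
qed

lemma tensor_measurable:
  fixes \<phi> :: "'x \<Rightarrow> 'h::{real_inner,second_countable_topology}"
    and u :: "'x \<Rightarrow> 'g::{real_normed_vector,second_countable_topology}"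
  assumes "u \<in> cme_tensor \<phi>" "\<phi> \<in> borel_measurable P"
  shows "u \<in> borel_measurable P"
proof -
  obtain A where A: "cme_hilbert_schmidt A" "u = (\<lambda>x. A (\<phi> x))"
    using assms(1) by (rule tensor_obtain)
  have "continuous_on UNIV A"
    using hilbert_schmidt_bounded_linear[OF A(1)] by (rule linear_continuous_on)
  then show ?thesis
    unfolding A(2) by (rule measurable_compose[OF assms(2) borel_measurable_continuous_onI])
qed

lemma tensor_integrable:
  fixes \<phi> :: "'x \<Rightarrow> 'h::{real_inner,banach,second_countable_topology}"
    and u :: "'x \<Rightarrow> 'g::{banach,second_countable_topology}"
  assumes "u \<in> cme_tensor \<phi>" "integrable P \<phi>"
  shows "integrable P u"
proof -
  obtain A where A: "cme_hilbert_schmidt A" "u = (\<lambda>x. A (\<phi> x))"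
    using assms(1) by (rule tensor_obtain)
  show ?thesis
    unfolding A(2) using hilbert_schmidt_bounded_linear[OF A(1)] assms(2)
    by (rule integrable_bounded_linear)
qed

section \<open>Square-integrable functions\<close>

lemma L2_measurable: "f \<in> cme_L2 P \<Longrightarrow> f \<in> borel_measurable P"
  unfolding cme_L2_def by simp

lemma L2_integrable:
  fixes f :: "'x \<Rightarrow> 'k::{banach,second_countable_topology}"
  assumes "finite_measure P" "f \<in> cme_L2 P"
  shows "integrable P f"
proof (rule Bochner_Integration.integrable_bound)
  show "integrable P (\<lambda>x. 1 + (norm (f x))\<^sup>2)"
    using assms unfolding cme_L2_def by (simp add: finite_measure.integrable_const)
  have "norm (f x) \<le> 1 + (norm (f x))\<^sup>2" for x
    using sum_squares_bound[of "norm (f x)" 1] norm_ge_zero[of "f x"]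
    by (simp only: power_one mult_1_right)
  then show "AE x in P. norm (f x) \<le> norm (1 + (norm (f x))\<^sup>2)"
    by (intro AE_I2) simp
qed (use assms(2) in \<open>rule L2_measurable\<close>)

lemma L2_bilinear_integrable:
  fixes f :: "'x \<Rightarrow> 'a::{banach,second_countable_topology}"
    and g :: "'x \<Rightarrow> 'b::{banach,second_countable_topology}"
    and prod :: "'a \<Rightarrow> 'b \<Rightarrow> 'c::{banach,second_countable_topology}"
  assumes "bounded_bilinear prod" "f \<in> cme_L2 P" "g \<in> cme_L2 P"
  shows "integrable P (\<lambda>x. prod (f x) (g x))"
proof -
  interpret bounded_bilinear prod by fact
  obtain K where K: "\<And>a b. norm (prod a b) \<le> norm a * norm b * K" "K > 0"
    using pos_bounded by blast
  show ?thesis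
  proof (rule Bochner_Integration.integrable_bound)
    show "integrable P (\<lambda>x. K * ((norm (f x))\<^sup>2 + (norm (g x))\<^sup>2))"
      using assms(2,3) unfolding cme_L2_def by simp
    have "continuous_on UNIV (\<lambda>z. prod (fst z) (snd z))"
      by (rule continuous_on[OF continuous_on_fst[OF continuous_on_id] continuous_on_snd[OF continuous_on_id]])
    then show "(\<lambda>x. prod (f x) (g x)) \<in> borel_measurable P"
      by (rule borel_measurable_continuous_Pair[OF L2_measurable[OF assms(2)] L2_measurable[OF assms(3)]])
    have "norm (prod (f x) (g x)) \<le> K * ((norm (f x))\<^sup>2 + (norm (g x))\<^sup>2)" for x
    proof -
      have "norm (f x) * norm (g x) \<le> (norm (f x))\<^sup>2 + (norm (g x))\<^sup>2"
        using sum_squares_bound[of "norm (f x)" "norm (g x)"]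
          mult_nonneg_nonneg[OF norm_ge_zero[of "f x"] norm_ge_zero[of "g x"]] by linarith
      then have "norm (f x) * norm (g x) * K \<le> K * ((norm (f x))\<^sup>2 + (norm (g x))\<^sup>2)"
        using K(2) by (simp add: mult.commute)
      then show ?thesis using K(1) order_trans by blast
    qed
    then show "AE x in P. norm (prod (f x) (g x)) \<le> norm (K * ((norm (f x))\<^sup>2 + (norm (g x))\<^sup>2))"
      using K(2) by (intro AE_I2) simp
  qed
qed

lemma L2_mult_integrable:
  fixes f g :: "'x \<Rightarrow> real"
  shows "f \<in> cme_L2 P \<Longrightarrow> g \<in> cme_L2 P \<Longrightarrow> integrable P (\<lambda>x. f x * g x)"
  by (rule L2_bilinear_integrable[OF bounded_bilinear_mult])

lemma L2_bounded_linear: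
  fixes f :: "'x \<Rightarrow> 'k::{banach,second_countable_topology}"
    and T :: "'k \<Rightarrow> 'j::{banach,second_countable_topology}"
  assumes "bounded_linear T" "f \<in> cme_L2 P"
  shows "(\<lambda>x. T (f x)) \<in> cme_L2 P"
proof -
  interpret T: bounded_linear T by fact
  obtain K where K: "\<And>x. norm (T x) \<le> norm x * K" "K > 0"
    using T.pos_bounded by blast
  have measurable: "(\<lambda>x. T (f x)) \<in> borel_measurable P"
    using assms(2) T.continuous_on[OF continuous_on_id]
    by (intro measurable_compose[OF L2_measurable borel_measurable_continuous_onI])
  have "integrable P (\<lambda>x. (norm (T (f x)))\<^sup>2)"
  proof (rule Bochner_Integration.integrable_bound)
    show "integrable P (\<lambda>x. K\<^sup>2 * (norm (f x))\<^sup>2)"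
      using assms(2) unfolding cme_L2_def by simp
    show "AE x in P. norm ((norm (T (f x)))\<^sup>2) \<le> norm (K\<^sup>2 * (norm (f x))\<^sup>2)"
    proof (intro AE_I2)
      fix x
      have "(norm (T (f x)))\<^sup>2 \<le> (norm (f x) * K)\<^sup>2"
        using K(1) by (rule power_mono) simp
      then show "norm ((norm (T (f x)))\<^sup>2) \<le> norm (K\<^sup>2 * (norm (f x))\<^sup>2)"
        by (simp add: power_mult_distrib mult.commute)
    qed
  qed (use measurable in simp)
  with measurable show ?thesis unfolding cme_L2_def by simp
qed

lemma L2_inner_left: "f \<in> cme_L2 P \<Longrightarrow> (\<lambda>x. f x \<bullet> b) \<in> cme_L2 P"
  by (rule L2_bounded_linear[OF bounded_linear_inner_left])

lemma L2_inner_right: "f \<in> cme_L2 P \<Longrightarrow> (\<lambda>x. b \<bullet> f x) \<in> cme_L2 P"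
  by (rule L2_bounded_linear[OF bounded_linear_inner_right])

lemma L2_diff:
  fixes f g :: "'x \<Rightarrow> 'k::{banach,second_countable_topology}"
  assumes "f \<in> cme_L2 P" "g \<in> cme_L2 P"
  shows "(\<lambda>x. f x - g x) \<in> cme_L2 P"
proof -
  have measurable: "(\<lambda>x. f x - g x) \<in> borel_measurable P"
    by (rule borel_measurable_diff[OF L2_measurable[OF assms(1)] L2_measurable[OF assms(2)]])
  have "integrable P (\<lambda>x. (norm (f x - g x))\<^sup>2)"
  proof (rule Bochner_Integration.integrable_bound)
    show "integrable P (\<lambda>x. 2 * (norm (f x))\<^sup>2 + 2 * (norm (g x))\<^sup>2)"
      using assms unfolding cme_L2_def by simp
    have "(norm (f x - g x))\<^sup>2 \<le> 2 * (norm (f x))\<^sup>2 + 2 * (norm (g x))\<^sup>2" for x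
    proof -
      have "(norm (f x - g x))\<^sup>2 \<le> (norm (f x) + norm (g x))\<^sup>2"
        by (rule power_mono[OF norm_triangle_ineq4 norm_ge_zero])
      also have "\<dots> \<le> 2 * (norm (f x))\<^sup>2 + 2 * (norm (g x))\<^sup>2"
        using sum_squares_bound[of "norm (f x)" "norm (g x)"] by (simp add: power2_sum)
      finally show ?thesis .
    qed
    then show "AE x in P. norm ((norm (f x - g x))\<^sup>2) \<le> norm (2 * (norm (f x))\<^sup>2 + 2 * (norm (g x))\<^sup>2)"
      by (intro AE_I2) simp
  qed (use measurable in simp)
  with measurable show ?thesis unfolding cme_L2_def by simp
qed

lemma L2_const: "finite_measure P \<Longrightarrow> (\<lambda>x. c) \<in> cme_L2 P"
  unfolding cme_L2_def by (simp add: finite_measure.integrable_const)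

lemma L2_distr_iff:
  assumes "X \<in> M \<rightarrow>\<^sub>M N" "f \<in> borel_measurable N"
  shows "f \<in> cme_L2 (distr M N X) \<longleftrightarrow> (\<lambda>\<omega>. f (X \<omega>)) \<in> cme_L2 M"
  using assms measurable_compose[OF assms]
  by (simp add: cme_L2_def integrable_distr_eq measurable_cong_sets[OF sets_distr refl])

lemma L2_comp_distr:
  assumes X: "X \<in> M \<rightarrow>\<^sub>M N" and f: "f \<in> cme_L2 (distr M N X)"
  shows "(\<lambda>\<omega>. f (X \<omega>)) \<in> cme_L2 M"
proof -
  have "f \<in> borel_measurable N"
    using L2_measurable[OF f] by simp
  then show ?thesis
    using f L2_distr_iff[OF X] by blast
qed

section \<open>From the tensor product to the RKHS\<close>

lemma mem_rkhs_fun_if_mem_tensor: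
  fixes \<phi> :: "'x \<Rightarrow> 'h::{real_inner,banach}" and f :: "'x \<Rightarrow> 'g::real_inner"
  assumes "cme_mem P (cme_tensor \<phi>) f"
  shows "cme_mem P (cme_rkhs_fun \<phi>) (\<lambda>x. g \<bullet> f x)"
proof -
  obtain u where u: "u \<in> cme_tensor \<phi>" "AE x in P. f x = u x"
    using assms unfolding cme_mem_def by blast
  from u(2) have "AE x in P. g \<bullet> f x = g \<bullet> u x"
    by eventually_elim simp
  then show ?thesis
    unfolding cme_mem_def by (intro bexI[OF _ tensor_inner_in_rkhs_fun[OF u(1), of g]])
qed

lemma memC_rkhs_fun_if_memC_tensor:
  fixes \<phi> :: "'x \<Rightarrow> 'h::{real_inner,banach}" and f :: "'x \<Rightarrow> 'g::real_inner"
  assumes "cme_memC P (cme_tensor \<phi>) f"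
  shows "cme_memC P (cme_rkhs_fun \<phi>) (\<lambda>x. g \<bullet> f x)"
proof -
  obtain u c where u: "u \<in> cme_tensor \<phi>" "AE x in P. f x = u x + c"
    using assms unfolding cme_memC_def by blast
  from u(2) have "AE x in P. g \<bullet> f x = g \<bullet> u x + g \<bullet> c"
    by eventually_elim (simp add: inner_add_right)
  then show ?thesis
    unfolding cme_memC_def by (intro bexI[OF _ tensor_inner_in_rkhs_fun[OF u(1), of g]] exI)
qed

lemma approximable_if_dominated:
  fixes D :: "'a \<Rightarrow> ennreal" and D' :: "'b \<Rightarrow> ennreal"
  assumes approx: "\<forall>e::real>0. \<exists>u\<in>S. D u < ennreal e"
    and dominated: "\<And>u. u \<in> S \<Longrightarrow> \<exists>v\<in>T. D' v \<le> ennreal K * D u"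
  shows "\<forall>e::real>0. \<exists>v\<in>T. D' v < ennreal e"
proof (intro allI impI)
  fix e :: real
  assume "e > 0"
  define K' where "K' = \<bar>K\<bar> + 1"
  have "K' > 0" unfolding K'_def by simp
  with approx \<open>e > 0\<close> obtain u where "u \<in> S" "D u < ennreal (e / K')"
    by (meson divide_pos_pos)
  with dominated obtain v where "v \<in> T" "D' v \<le> ennreal K * D u"
    by blast
  note \<open>D' v \<le> ennreal K * D u\<close>
  also have "ennreal K * D u \<le> ennreal K' * D u"
    unfolding K'_def by (intro mult_right_mono ennreal_leI) auto
  also have "\<dots> < ennreal K' * ennreal (e / K')"
    using \<open>D u < ennreal (e / K')\<close> \<open>K' > 0\<close> by (intro ennreal_mult_strict_left_mono) auto
  also have "\<dots> = ennreal e"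
    using \<open>K' > 0\<close> \<open>e > 0\<close> by (simp add: ennreal_mult[symmetric])
  finally show "\<exists>v\<in>T. D' v < ennreal e"
    using \<open>v \<in> T\<close> by blast
qed

lemma nn_integral_inner_square_le:
  fixes w :: "'x \<Rightarrow> 'a::{real_inner,second_countable_topology}"
  assumes [measurable]: "w \<in> borel_measurable P"
  shows "(\<integral>\<^sup>+x. ennreal ((g \<bullet> w x)\<^sup>2) \<partial>P) \<le> ennreal ((norm g)\<^sup>2) * (\<integral>\<^sup>+x. ennreal ((norm (w x))\<^sup>2) \<partial>P)"
proof -
  have "(\<integral>\<^sup>+x. ennreal ((g \<bullet> w x)\<^sup>2) \<partial>P) \<le> (\<integral>\<^sup>+x. ennreal ((norm g)\<^sup>2) * ennreal ((norm (w x))\<^sup>2) \<partial>P)"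
  proof (rule nn_integral_mono)
    fix x
    have "(g \<bullet> w x)\<^sup>2 \<le> (norm g)\<^sup>2 * (norm (w x))\<^sup>2"
      using power_mono[OF Cauchy_Schwarz_ineq2[of g "w x"] abs_ge_zero, of 2]
      by (simp add: power_mult_distrib)
    then show "ennreal ((g \<bullet> w x)\<^sup>2) \<le> ennreal ((norm g)\<^sup>2) * ennreal ((norm (w x))\<^sup>2)"
      by (simp add: ennreal_mult[symmetric])
  qed
  also have "\<dots> = ennreal ((norm g)\<^sup>2) * (\<integral>\<^sup>+x. ennreal ((norm (w x))\<^sup>2) \<partial>P)"
    by (rule nn_integral_cmult) measurable
  finally show ?thesis .
qed

lemma closure_rkhs_fun_if_closure_tensor:
  fixes \<phi> :: "'x \<Rightarrow> 'h::{real_inner,banach,second_countable_topology}"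
    and f :: "'x \<Rightarrow> 'g::{real_inner,banach,second_countable_topology}"
  assumes closure: "cme_closure P (cme_tensor \<phi>) f"
    and f: "f \<in> borel_measurable P" and \<phi>: "\<phi> \<in> borel_measurable P"
  shows "cme_closure P (cme_rkhs_fun \<phi>) (\<lambda>x. g \<bullet> f x)"
  unfolding cme_closure_def
proof (rule approximable_if_dominated[where K="(norm g)\<^sup>2", OF closure[unfolded cme_closure_def]],
    goal_cases)
  case (1 u)
  have "(\<lambda>x. f x - u x) \<in> borel_measurable P"
    using f tensor_measurable[OF 1 \<phi>] by (rule borel_measurable_diff)
  from nn_integral_inner_square_le[OF this, of g]
  have "(\<integral>\<^sup>+x. ennreal ((norm (g \<bullet> f x - g \<bullet> u x))\<^sup>2) \<partial>P)
      \<le> ennreal ((norm g)\<^sup>2) * (\<integral>\<^sup>+x. ennreal ((norm (f x - u x))\<^sup>2) \<partial>P)"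
    by (simp add: inner_diff_right)
  then show ?case
    by (intro bexI[OF _ tensor_inner_in_rkhs_fun[OF 1, of g]])
qed

lemma closureC_rkhs_fun_if_closureC_tensor:
  fixes \<phi> :: "'x \<Rightarrow> 'h::{real_inner,banach,second_countable_topology}"
    and f :: "'x \<Rightarrow> 'g::{real_inner,banach,second_countable_topology}"
  assumes closure: "cme_closureC P (cme_tensor \<phi>) f"
    and f: "integrable P f" and \<phi>: "integrable P \<phi>"
  shows "cme_closureC P (cme_rkhs_fun \<phi>) (\<lambda>x. g \<bullet> f x)"
  unfolding cme_closureC_def
proof (rule approximable_if_dominated[where K="(norm g)\<^sup>2", OF closure[unfolded cme_closureC_def]],
    goal_cases)
  case (1 u)
  define C where "C = (\<integral>y. (f y - u y) \<partial>P)"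
  have fu: "integrable P (\<lambda>x. f x - u x)"
    using f tensor_integrable[OF 1 \<phi>] by simp
  have "(\<integral>y. (g \<bullet> f y - g \<bullet> u y) \<partial>P) = (\<integral>y. g \<bullet> (f y - u y) \<partial>P)"
    by (simp add: inner_diff_right)
  also have "\<dots> = g \<bullet> C"
    unfolding C_def using fu by simp
  finally have centre: "(\<integral>y. (g \<bullet> f y - g \<bullet> u y) \<partial>P) = g \<bullet> C" .
  have "(\<lambda>x. (f x - u x) - C) \<in> borel_measurable P"
    using fu by simp
  from nn_integral_inner_square_le[OF this, of g]
  have "(\<integral>\<^sup>+x. ennreal ((norm ((g \<bullet> f x - g \<bullet> u x) - (\<integral>y. (g \<bullet> f y - g \<bullet> u y) \<partial>P)))\<^sup>2) \<partial>P)
      \<le> ennreal ((norm g)\<^sup>2) * (\<integral>\<^sup>+x. ennreal ((norm ((f x - u x) - C))\<^sup>2) \<partial>P)"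
    unfolding centre by (simp add: inner_diff_right)
  then show ?case
    unfolding C_def by (intro bexI[OF _ tensor_inner_in_rkhs_fun[OF 1, of g]])
qed

lemma proj_rkhs_fun_if_proj_tensor:
  fixes \<phi> :: "'x \<Rightarrow> 'h::{real_inner,banach,second_countable_topology}"
    and f p :: "'x \<Rightarrow> 'g::{real_inner,banach,second_countable_topology}"
  assumes proj: "cme_proj P (cme_tensor \<phi>) f p" and mem: "cme_mem P (cme_tensor \<phi>) p"
    and \<phi>: "\<phi> \<in> borel_measurable P"
  shows "cme_proj P (cme_rkhs_fun \<phi>) (\<lambda>x. g \<bullet> f x) (\<lambda>x. g \<bullet> p x)"
proof -
  have p: "p \<in> cme_L2 P" "cme_closure P (cme_tensor \<phi>) p"
    and orth: "\<And>u. u \<in> cme_tensor \<phi> \<Longrightarrow> (\<integral>x. (f x - p x) \<bullet> u x \<partial>P) = 0"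
    using proj unfolding cme_proj_def by auto
  obtain u0 :: "'x \<Rightarrow> 'g" where u0: "u0 \<in> cme_tensor \<phi>"
    using mem unfolding cme_mem_def by blast
  have "(\<integral>x. (g \<bullet> f x - g \<bullet> p x) \<bullet> v x \<partial>P) = 0" if v: "v \<in> cme_rkhs_fun \<phi>" for v
  proof -
    obtain h where h: "v = (\<lambda>x. h \<bullet> \<phi> x)"
      using v by (rule rkhs_fun_obtain)
    have "(\<integral>x. (g \<bullet> f x - g \<bullet> p x) \<bullet> v x \<partial>P) = (\<integral>x. (f x - p x) \<bullet> ((h \<bullet> \<phi> x) *\<^sub>R g) \<partial>P)"
      unfolding h by (simp add: inner_diff_left inner_diff_right inner_commute algebra_simps)
    also have "\<dots> = 0"
      by (rule orth[OF tensor_rank_one[OF u0]])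
    finally show ?thesis .
  qed
  then show ?thesis
    unfolding cme_proj_def
    using L2_inner_right[OF p(1)] closure_rkhs_fun_if_closure_tensor[OF p(2) L2_measurable[OF p(1)] \<phi>]
    by blast
qed

lemma projC_rkhs_fun_if_projC_tensor:
  fixes \<phi> :: "'x \<Rightarrow> 'h::{real_inner,banach,second_countable_topology}"
    and f p :: "'x \<Rightarrow> 'g::{real_inner,banach,second_countable_topology}"
  assumes proj: "cme_projC P (cme_tensor \<phi>) f p" and mem: "cme_memC P (cme_tensor \<phi>) p"
    and P: "finite_measure P" and f: "f \<in> cme_L2 P" and \<phi>: "\<phi> \<in> cme_L2 P"
  shows "cme_projC P (cme_rkhs_fun \<phi>) (\<lambda>x. g \<bullet> f x) (\<lambda>x. g \<bullet> p x)"
proof -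
  have p: "p \<in> cme_L2 P" "cme_closureC P (cme_tensor \<phi>) p"
    and orth: "\<And>u. u \<in> cme_tensor \<phi> \<Longrightarrow>
      (\<integral>x. ((f x - p x) - (\<integral>y. (f y - p y) \<partial>P)) \<bullet> (u x - (\<integral>y. u y \<partial>P)) \<partial>P) = 0"
    using proj unfolding cme_projC_def by auto
  obtain u0 :: "'x \<Rightarrow> 'g" where u0: "u0 \<in> cme_tensor \<phi>"
    using mem unfolding cme_memC_def by blast
  have fp: "integrable P (\<lambda>x. f x - p x)"
    using L2_integrable[OF P f] L2_integrable[OF P p(1)] by simp
  have \<phi>_int: "integrable P \<phi>"
    by (rule L2_integrable[OF P \<phi>])
  define C where "C = (\<integral>y. (f y - p y) \<partial>P)"
  have "(\<integral>y. (g \<bullet> f y - g \<bullet> p y) \<partial>P) = (\<integral>y. g \<bullet> (f y - p y) \<partial>P)"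
    by (simp add: inner_diff_right)
  also have "\<dots> = g \<bullet> C"
    unfolding C_def using fp by simp
  finally have centre: "(\<integral>y. (g \<bullet> f y - g \<bullet> p y) \<partial>P) = g \<bullet> C" .
  have "(\<integral>x. ((g \<bullet> f x - g \<bullet> p x) - (\<integral>y. (g \<bullet> f y - g \<bullet> p y) \<partial>P)) \<bullet> (v x - (\<integral>y. v y \<partial>P)) \<partial>P) = 0"
    if v: "v \<in> cme_rkhs_fun \<phi>" for v
  proof -
    obtain h where h: "v = (\<lambda>x. h \<bullet> \<phi> x)"
      using v by (rule rkhs_fun_obtain)
    have "(\<integral>y. (h \<bullet> \<phi> y) *\<^sub>R g \<partial>P) = (\<integral>y. h \<bullet> \<phi> y \<partial>P) *\<^sub>R g"
      using \<phi>_int by simp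
    then have "(\<integral>x. ((g \<bullet> f x - g \<bullet> p x) - (\<integral>y. (g \<bullet> f y - g \<bullet> p y) \<partial>P)) \<bullet> (v x - (\<integral>y. v y \<partial>P)) \<partial>P)
        = (\<integral>x. ((f x - p x) - C) \<bullet> ((h \<bullet> \<phi> x) *\<^sub>R g - (\<integral>y. (h \<bullet> \<phi> y) *\<^sub>R g \<partial>P)) \<partial>P)"
      unfolding h centre by (simp add: inner_diff_left inner_diff_right inner_commute algebra_simps)
    also have "\<dots> = 0"
      unfolding C_def by (rule orth[OF tensor_rank_one[OF u0]])
    finally show ?thesis .
  qed
  then show ?thesis
    unfolding cme_projC_def
    using L2_inner_right[OF p(1)]
      closureC_rkhs_fun_if_closureC_tensor[OF p(2) L2_integrable[OF P p(1)] \<phi>_int]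
    by blast
qed

section \<open>Conditional means and covariance operators\<close>

lemma integrable_indicator_comp_scaleR:
  fixes d :: "'w \<Rightarrow> 'b::{banach,second_countable_topology}"
  assumes X: "X \<in> M \<rightarrow>\<^sub>M N" and A: "A \<in> sets N" and d: "integrable M d"
  shows "integrable M (\<lambda>\<omega>. indicator A (X \<omega>) *\<^sub>R d \<omega>)"
proof (rule Bochner_Integration.integrable_bound[OF d])
  show "(\<lambda>\<omega>. indicator A (X \<omega>) *\<^sub>R d \<omega>) \<in> borel_measurable M"
    using measurable_compose[OF X borel_measurable_indicator[OF A]] borel_measurable_integrable[OF d]
    by (rule borel_measurable_scaleR)
  show "AE \<omega> in M. norm (indicator A (X \<omega>) *\<^sub>R d \<omega>) \<le> norm (d \<omega>)"
    by (intro AE_I2) (simp add: indicator_def)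
qed

lemma integral_simple_comp_mult_eq_0:
  fixes s :: "'x \<Rightarrow> real" and d :: "'w \<Rightarrow> real"
  assumes X: "X \<in> M \<rightarrow>\<^sub>M N" and s: "simple_function N s" and d: "integrable M d"
    and orth: "\<And>A. A \<in> sets N \<Longrightarrow> (\<integral>\<omega>. indicator A (X \<omega>) * d \<omega> \<partial>M) = 0"
  shows "(\<integral>\<omega>. s (X \<omega>) * d \<omega> \<partial>M) = 0"
proof -
  define A where "A y = s -` {y} \<inter> space N" for y
  have A: "A y \<in> sets N" for y
    unfolding A_def by (rule simple_functionD(2)[OF s])
  have A_int: "integrable M (\<lambda>\<omega>. indicator (A y) (X \<omega>) * d \<omega>)" for y
    using integrable_indicator_comp_scaleR[OF X A d] by simp
  have "s (X \<omega>) * d \<omega> = (\<Sum>y\<in>s ` space N. y * (indicator (A y) (X \<omega>) * d \<omega>))"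
    if "\<omega> \<in> space M" for \<omega>
  proof -
    have "s (X \<omega>) = (\<Sum>y\<in>s ` space N. indicator (A y) (X \<omega>) *\<^sub>R y)"
      unfolding A_def by (rule simple_function_indicator_representation_banach[OF s measurable_space[OF X that]])
    then show ?thesis
      by (simp add: sum_distrib_left sum_distrib_right mult_ac)
  qed
  then have "(\<integral>\<omega>. s (X \<omega>) * d \<omega> \<partial>M) = (\<integral>\<omega>. (\<Sum>y\<in>s ` space N. y * (indicator (A y) (X \<omega>) * d \<omega>)) \<partial>M)"
    by (rule Bochner_Integration.integral_cong[OF refl])
  also have "\<dots> = (\<Sum>y\<in>s ` space N. y * (\<integral>\<omega>. indicator (A y) (X \<omega>) * d \<omega> \<partial>M))"
    using A_int by (subst Bochner_Integration.integral_sum) simp_all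
  also have "\<dots> = 0"
    by (simp add: orth A)
  finally show ?thesis .
qed

lemma integral_comp_mult_eq_0_if_indicators:
  fixes f :: "'x \<Rightarrow> real" and d :: "'w \<Rightarrow> real"
  assumes X: "X \<in> M \<rightarrow>\<^sub>M N" and d: "integrable M d"
    and orth: "\<And>A. A \<in> sets N \<Longrightarrow> (\<integral>\<omega>. indicator A (X \<omega>) * d \<omega> \<partial>M) = 0"
    and f: "f \<in> borel_measurable N" and fd: "integrable M (\<lambda>\<omega>. f (X \<omega>) * d \<omega>)"
  shows "(\<integral>\<omega>. f (X \<omega>) * d \<omega> \<partial>M) = 0"
proof -
  obtain s where s: "\<And>i. simple_function N (s i)"
    and lim: "\<And>x. x \<in> space N \<Longrightarrow> (\<lambda>i. s i x) \<longlonglongrightarrow> f x"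
    and bound: "\<And>i x. x \<in> space N \<Longrightarrow> dist (s i x) 0 \<le> 2 * dist (f x) 0"
    using borel_measurable_implies_sequence_metric[OF f, of 0] by blast
  have "(\<lambda>i. \<integral>\<omega>. s i (X \<omega>) * d \<omega> \<partial>M) \<longlonglongrightarrow> (\<integral>\<omega>. f (X \<omega>) * d \<omega> \<partial>M)"
  proof (rule integral_dominated_convergence[where w="\<lambda>\<omega>. 2 * \<bar>f (X \<omega>) * d \<omega>\<bar>"])
    show "(\<lambda>\<omega>. s i (X \<omega>) * d \<omega>) \<in> borel_measurable M" for i
      using measurable_compose[OF X borel_measurable_simple_function[OF s]] borel_measurable_integrable[OF d]
      by (rule borel_measurable_times)
    show "AE \<omega> in M. (\<lambda>i. s i (X \<omega>) * d \<omega>) \<longlonglongrightarrow> f (X \<omega>) * d \<omega>"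
      using lim measurable_space[OF X] by (intro AE_I2 tendsto_mult_right) auto
    show "AE \<omega> in M. norm (s i (X \<omega>) * d \<omega>) \<le> 2 * \<bar>f (X \<omega>) * d \<omega>\<bar>" for i
    proof (intro AE_I2)
      fix \<omega> assume "\<omega> \<in> space M"
      then have "\<bar>s i (X \<omega>)\<bar> \<le> 2 * \<bar>f (X \<omega>)\<bar>"
        using bound[of "X \<omega>" i] measurable_space[OF X] by simp
      then have "\<bar>s i (X \<omega>)\<bar> * \<bar>d \<omega>\<bar> \<le> 2 * \<bar>f (X \<omega>)\<bar> * \<bar>d \<omega>\<bar>"
        by (rule mult_right_mono) simp
      then show "norm (s i (X \<omega>) * d \<omega>) \<le> 2 * \<bar>f (X \<omega>) * d \<omega>\<bar>"
        by (simp add: abs_mult mult.assoc)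
    qed
  qed (use fd in auto)
  moreover have "(\<integral>\<omega>. s i (X \<omega>) * d \<omega> \<partial>M) = 0" for i
    by (rule integral_simple_comp_mult_eq_0[OF X s d orth])
  ultimately show ?thesis
    by (simp add: LIMSEQ_const_iff)
qed

lemma cond_mean_integral_mult:
  fixes U :: "'w \<Rightarrow> 'g::{real_inner,banach,second_countable_topology}" and f :: "'x \<Rightarrow> real"
  assumes M: "prob_space M" and X: "X \<in> M \<rightarrow>\<^sub>M N" and U: "U \<in> cme_L2 M"
    and m: "cme_cond_mean M X N U m" and f: "f \<in> cme_L2 (distr M N X)"
  shows "(\<integral>\<omega>. f (X \<omega>) * (U \<omega> \<bullet> b) \<partial>M) = (\<integral>x. f x * (m x \<bullet> b) \<partial>distr M N X)"
proof -
  interpret prob_space M by (rule M)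
  have mL2: "m \<in> cme_L2 (distr M N X)"
    and cond_mean: "\<And>A. A \<in> sets N \<Longrightarrow>
      (\<integral>\<omega>. indicator A (X \<omega>) *\<^sub>R U \<omega> \<partial>M) = (\<integral>x. indicator A x *\<^sub>R m x \<partial>distr M N X)"
    using m unfolding cme_cond_mean_def by auto
  have m_meas: "m \<in> borel_measurable N" and f_meas: "f \<in> borel_measurable N"
    using L2_measurable[OF mL2] L2_measurable[OF f] by simp_all
  have mX: "(\<lambda>\<omega>. m (X \<omega>)) \<in> cme_L2 M" and fX: "(\<lambda>\<omega>. f (X \<omega>)) \<in> cme_L2 M"
    using L2_comp_distr[OF X] mL2 f by blast+
  define d where "d \<omega> = U \<omega> \<bullet> b - m (X \<omega>) \<bullet> b" for \<omega>
  have dL2: "d \<in> cme_L2 M"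
    unfolding d_def by (intro L2_diff L2_inner_left U mX)
  have orth: "(\<integral>\<omega>. indicator A (X \<omega>) * d \<omega> \<partial>M) = 0" if A: "A \<in> sets N" for A
  proof -
    have UA: "integrable M (\<lambda>\<omega>. indicator A (X \<omega>) *\<^sub>R U \<omega>)"
      by (rule integrable_indicator_comp_scaleR[OF X A L2_integrable[OF finite_measure_axioms U]])
    have mA: "integrable M (\<lambda>\<omega>. indicator A (X \<omega>) *\<^sub>R m (X \<omega>))"
      by (rule integrable_indicator_comp_scaleR[OF X A L2_integrable[OF finite_measure_axioms mX]])
    have "(\<integral>\<omega>. indicator A (X \<omega>) *\<^sub>R m (X \<omega>) \<partial>M) = (\<integral>x. indicator A x *\<^sub>R m x \<partial>distr M N X)"
      using borel_measurable_scaleR[OF borel_measurable_indicator[OF A] m_meas]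
      by (rule integral_distr[OF X, symmetric])
    also have "\<dots> = (\<integral>\<omega>. indicator A (X \<omega>) *\<^sub>R U \<omega> \<partial>M)"
      using cond_mean[OF A] by simp
    finally have same: "(\<integral>\<omega>. indicator A (X \<omega>) *\<^sub>R m (X \<omega>) \<partial>M) = (\<integral>\<omega>. indicator A (X \<omega>) *\<^sub>R U \<omega> \<partial>M)" .
    have "(\<integral>\<omega>. indicator A (X \<omega>) * d \<omega> \<partial>M)
        = (\<integral>\<omega>. (indicator A (X \<omega>) *\<^sub>R U \<omega>) \<bullet> b - (indicator A (X \<omega>) *\<^sub>R m (X \<omega>)) \<bullet> b \<partial>M)"
      by (simp add: d_def right_diff_distrib)
    also have "\<dots> = (\<integral>\<omega>. (indicator A (X \<omega>) *\<^sub>R U \<omega>) \<bullet> b \<partial>M) - (\<integral>\<omega>. (indicator A (X \<omega>) *\<^sub>R m (X \<omega>)) \<bullet> b \<partial>M)"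
      by (rule Bochner_Integration.integral_diff[OF integrable_bounded_linear[OF bounded_linear_inner_left UA]
            integrable_bounded_linear[OF bounded_linear_inner_left mA]])
    also have "\<dots> = (\<integral>\<omega>. indicator A (X \<omega>) *\<^sub>R U \<omega> \<partial>M) \<bullet> b - (\<integral>\<omega>. indicator A (X \<omega>) *\<^sub>R m (X \<omega>) \<partial>M) \<bullet> b"
      by (simp only: integral_bounded_linear[OF bounded_linear_inner_left UA]
          integral_bounded_linear[OF bounded_linear_inner_left mA])
    finally show ?thesis
      by (simp only: same diff_self)
  qed
  have "(\<integral>\<omega>. f (X \<omega>) * d \<omega> \<partial>M) = 0"
    by (rule integral_comp_mult_eq_0_if_indicators[OF X L2_integrable[OF finite_measure_axioms dL2] orth
          f_meas L2_mult_integrable[OF fX dL2]])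
  moreover have "(\<integral>\<omega>. f (X \<omega>) * d \<omega> \<partial>M)
      = (\<integral>\<omega>. f (X \<omega>) * (U \<omega> \<bullet> b) \<partial>M) - (\<integral>\<omega>. f (X \<omega>) * (m (X \<omega>) \<bullet> b) \<partial>M)"
    using L2_mult_integrable[OF fX L2_inner_left[OF U]] L2_mult_integrable[OF fX L2_inner_left[OF mX]]
    by (simp add: d_def right_diff_distrib)
  moreover have "(\<integral>\<omega>. f (X \<omega>) * (m (X \<omega>) \<bullet> b) \<partial>M) = (\<integral>x. f x * (m x \<bullet> b) \<partial>distr M N X)"
    using borel_measurable_times[OF f_meas borel_measurable_inner[OF m_meas borel_measurable_const]]
    by (rule integral_distr[OF X, symmetric])
  ultimately show ?thesis by simp
qed

lemma cond_mean_comp: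
  assumes X: "X \<in> M \<rightarrow>\<^sub>M N" and f: "f \<in> cme_L2 (distr M N X)"
  shows "cme_cond_mean M X N (\<lambda>\<omega>. f (X \<omega>)) f"
  unfolding cme_cond_mean_def
proof (intro conjI ballI f)
  fix A assume "A \<in> sets N"
  then have "(\<lambda>x. indicator A x *\<^sub>R f x) \<in> borel_measurable N"
    using L2_measurable[OF f] by simp
  then show "(\<integral>\<omega>. indicator A (X \<omega>) *\<^sub>R f (X \<omega>) \<partial>M) = (\<integral>x. indicator A x *\<^sub>R f x \<partial>distr M N X)"
    by (rule integral_distr[OF X, symmetric])
qed

lemma integral_centred_mult_add_const:
  fixes a f :: "'x \<Rightarrow> real"
  assumes "integrable M a" "(\<integral>x. a x \<partial>M) = 0" "integrable M (\<lambda>x. a x * f x)"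
  shows "(\<integral>x. a x * (f x + c) \<partial>M) = (\<integral>x. a x * f x \<partial>M)"
proof -
  have "(\<integral>x. a x * (f x + c) \<partial>M) = (\<integral>x. a x * f x + c * a x \<partial>M)"
    by (simp add: algebra_simps)
  also have "\<dots> = (\<integral>x. a x * f x \<partial>M) + c * (\<integral>x. a x \<partial>M)"
    using assms(1,3) by simp
  finally show ?thesis
    using assms(2) by simp
qed

lemma integral_centred_mult_cong_AE:
  fixes a q w :: "'x \<Rightarrow> real"
  assumes P: "finite_measure P" and a: "a \<in> cme_L2 P" "(\<integral>x. a x \<partial>P) = 0"
    and q: "q \<in> cme_L2 P" and w: "w \<in> cme_L2 P" and eq: "AE x in P. q x = w x + c"
  shows "(\<integral>x. a x * q x \<partial>P) = (\<integral>x. a x * w x \<partial>P)"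
proof -
  have "(\<integral>x. a x * q x \<partial>P) = (\<integral>x. a x * (w x + c) \<partial>P)"
    using eq
    by (intro integral_cong_AE borel_measurable_times borel_measurable_add borel_measurable_const
        L2_measurable a(1) q w) (auto elim: eventually_mono)
  also have "\<dots> = (\<integral>x. a x * w x \<partial>P)"
    by (rule integral_centred_mult_add_const[OF L2_integrable[OF P a(1)] a(2) L2_mult_integrable[OF a(1) w]])
  finally show ?thesis .
qed

lemma proj_rkhs_fun_normal_eq:
  fixes \<phi> :: "'x \<Rightarrow> 'h::{real_inner,banach,second_countable_topology}" and f q :: "'x \<Rightarrow> real"
  assumes proj: "cme_proj P (cme_rkhs_fun \<phi>) f q" and f: "f \<in> cme_L2 P" and \<phi>: "\<phi> \<in> cme_L2 P"
  shows "(\<integral>x. (h \<bullet> \<phi> x) * f x \<partial>P) = (\<integral>x. (h \<bullet> \<phi> x) * q x \<partial>P)"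
proof -
  have q: "q \<in> cme_L2 P" and orth: "(\<integral>x. (f x - q x) \<bullet> (h \<bullet> \<phi> x) \<partial>P) = 0"
    using proj unfolding cme_proj_def by auto
  have a: "(\<lambda>x. h \<bullet> \<phi> x) \<in> cme_L2 P"
    by (rule L2_inner_right[OF \<phi>])
  have "(\<integral>x. (h \<bullet> \<phi> x) * f x \<partial>P) - (\<integral>x. (h \<bullet> \<phi> x) * q x \<partial>P)
      = (\<integral>x. (h \<bullet> \<phi> x) * f x - (h \<bullet> \<phi> x) * q x \<partial>P)"
    by (rule Bochner_Integration.integral_diff[OF L2_mult_integrable[OF a f] L2_mult_integrable[OF a q], symmetric])
  also have "\<dots> = 0"
    using orth by (simp add: algebra_simps)
  finally show ?thesis by simp
qed

lemma projC_rkhs_fun_normal_eq: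
  fixes \<phi> :: "'x \<Rightarrow> 'h::{real_inner,banach,second_countable_topology}" and f q :: "'x \<Rightarrow> real"
    and h :: 'h
  assumes proj: "cme_projC P (cme_rkhs_fun \<phi>) f q" and P: "prob_space P"
    and f: "f \<in> cme_L2 P" and \<phi>: "\<phi> \<in> cme_L2 P"
  defines "\<nu> \<equiv> \<integral>y. h \<bullet> \<phi> y \<partial>P"
  shows "(\<integral>x. (h \<bullet> \<phi> x - \<nu>) * f x \<partial>P) = (\<integral>x. (h \<bullet> \<phi> x - \<nu>) * q x \<partial>P)"
proof -
  interpret prob_space P by (rule P)
  define C where "C = (\<integral>y. (f y - q y) \<partial>P)"
  have q: "q \<in> cme_L2 P" and orth: "(\<integral>x. ((f x - q x) - C) \<bullet> (h \<bullet> \<phi> x - \<nu>) \<partial>P) = 0"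
    using proj unfolding cme_projC_def C_def \<nu>_def by auto
  have a: "(\<lambda>x. h \<bullet> \<phi> x - \<nu>) \<in> cme_L2 P"
    by (intro L2_diff L2_inner_right \<phi> L2_const finite_measure)
  have a_centred: "(\<integral>x. h \<bullet> \<phi> x - \<nu> \<partial>P) = 0"
    using L2_integrable[OF finite_measure \<phi>] unfolding \<nu>_def by (simp add: prob_space)
  have fq: "(\<lambda>x. f x - q x) \<in> cme_L2 P"
    by (rule L2_diff[OF f q])
  have "(\<integral>x. (h \<bullet> \<phi> x - \<nu>) * f x \<partial>P) - (\<integral>x. (h \<bullet> \<phi> x - \<nu>) * q x \<partial>P)
      = (\<integral>x. (h \<bullet> \<phi> x - \<nu>) * (f x - q x) \<partial>P)"
    using L2_mult_integrable[OF a f] L2_mult_integrable[OF a q] by (simp add: right_diff_distrib)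
  also have "\<dots> = (\<integral>x. (h \<bullet> \<phi> x - \<nu>) * ((f x - q x) + - C) \<partial>P)"
    by (rule integral_centred_mult_add_const[OF L2_integrable[OF finite_measure a] a_centred
          L2_mult_integrable[OF a fq], symmetric])
  also have "\<dots> = 0"
    using orth by (simp add: algebra_simps)
  finally show ?thesis by simp
qed

lemma range_subset_if_inner_eq:
  fixes T :: "'a \<Rightarrow> 'h::real_inner" and S :: "'b \<Rightarrow> 'h"
  assumes "\<And>b. \<exists>k. \<forall>h. h \<bullet> T b = h \<bullet> S k"
  shows "range T \<subseteq> range S"
proof (rule image_subsetI)
  fix b
  obtain k where "\<forall>h. h \<bullet> T b = h \<bullet> S k"
    using assms by blast
  then have "T b = S k"
    by (simp only: vector_eq_ldot)
  then show "T b \<in> range S" by simp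
qed

lemma inner_ucov_cond_mean:
  fixes \<phi> :: "'x \<Rightarrow> 'h::{real_inner,banach,second_countable_topology}"
    and U :: "'w \<Rightarrow> 'g::{real_inner,banach,second_countable_topology}"
  assumes M: "prob_space M" and X: "X \<in> M \<rightarrow>\<^sub>M N" and U: "U \<in> cme_L2 M"
    and m: "cme_cond_mean M X N U m" and \<phi>: "\<phi> \<in> cme_L2 (distr M N X)"
  shows "h \<bullet> cme_ucov M (\<lambda>\<omega>. \<phi> (X \<omega>)) U b = (\<integral>x. (h \<bullet> \<phi> x) * (m x \<bullet> b) \<partial>distr M N X)"
proof -
  have V: "(\<lambda>\<omega>. \<phi> (X \<omega>)) \<in> cme_L2 M"
    by (rule L2_comp_distr[OF X \<phi>])
  have "h \<bullet> cme_ucov M (\<lambda>\<omega>. \<phi> (X \<omega>)) U b = (\<integral>\<omega>. h \<bullet> ((U \<omega> \<bullet> b) *\<^sub>R \<phi> (X \<omega>)) \<partial>M)"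
    unfolding cme_ucov_def
    by (rule integral_bounded_linear[OF bounded_linear_inner_right
          L2_bilinear_integrable[OF bounded_bilinear_scaleR L2_inner_left[OF U] V], symmetric])
  also have "\<dots> = (\<integral>\<omega>. (h \<bullet> \<phi> (X \<omega>)) * (U \<omega> \<bullet> b) \<partial>M)"
    by (simp add: mult.commute)
  also have "\<dots> = (\<integral>x. (h \<bullet> \<phi> x) * (m x \<bullet> b) \<partial>distr M N X)"
    by (rule cond_mean_integral_mult[OF M X U m L2_inner_right[OF \<phi>]])
  finally show ?thesis .
qed

lemma inner_cov_cond_mean:
  fixes \<phi> :: "'x \<Rightarrow> 'h::{real_inner,banach,second_countable_topology}"
    and U :: "'w \<Rightarrow> 'g::{real_inner,banach,second_countable_topology}" and h :: 'h
  assumes M: "prob_space M" and X: "X \<in> M \<rightarrow>\<^sub>M N" and U: "U \<in> cme_L2 M"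
    and m: "cme_cond_mean M X N U m" and \<phi>: "\<phi> \<in> cme_L2 (distr M N X)"
  defines "\<nu> \<equiv> \<integral>y. h \<bullet> \<phi> y \<partial>distr M N X"
  shows "h \<bullet> cme_cov M (\<lambda>\<omega>. \<phi> (X \<omega>)) U b = (\<integral>x. (h \<bullet> \<phi> x - \<nu>) * (m x \<bullet> b) \<partial>distr M N X)"
proof -
  interpret prob_space M by (rule M)
  interpret P: prob_space "distr M N X" by (rule prob_space_distr[OF X])
  define \<mu>U where "\<mu>U = (\<integral>\<omega>. U \<omega> \<partial>M)"
  define \<mu>V where "\<mu>V = (\<integral>\<omega>. \<phi> (X \<omega>) \<partial>M)"
  have \<phi>_meas: "\<phi> \<in> borel_measurable N"
    using L2_measurable[OF \<phi>] by simp
  have V: "(\<lambda>\<omega>. \<phi> (X \<omega>)) \<in> cme_L2 M"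
    by (rule L2_comp_distr[OF X \<phi>])
  have "h \<bullet> \<mu>V = (\<integral>\<omega>. h \<bullet> \<phi> (X \<omega>) \<partial>M)"
    unfolding \<mu>V_def using L2_integrable[OF finite_measure V] by simp
  also have "\<dots> = \<nu>"
    unfolding \<nu>_def using borel_measurable_inner[OF borel_measurable_const \<phi>_meas]
    by (rule integral_distr[OF X, symmetric])
  finally have \<nu>: "h \<bullet> \<mu>V = \<nu>" .
  have a: "(\<lambda>\<omega>. h \<bullet> \<phi> (X \<omega>) - \<nu>) \<in> cme_L2 M"
    by (intro L2_diff L2_inner_right V L2_const finite_measure)
  have a_centred: "(\<integral>\<omega>. h \<bullet> \<phi> (X \<omega>) - \<nu> \<partial>M) = 0"
    using L2_integrable[OF finite_measure V] \<nu> unfolding \<mu>V_def by (simp add: prob_space)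
  have "h \<bullet> cme_cov M (\<lambda>\<omega>. \<phi> (X \<omega>)) U b = (\<integral>\<omega>. h \<bullet> (((U \<omega> - \<mu>U) \<bullet> b) *\<^sub>R (\<phi> (X \<omega>) - \<mu>V)) \<partial>M)"
    unfolding cme_cov_def \<mu>U_def[symmetric] \<mu>V_def[symmetric]
    by (rule integral_bounded_linear[OF bounded_linear_inner_right
          L2_bilinear_integrable[OF bounded_bilinear_scaleR L2_inner_left[OF L2_diff[OF U L2_const]]
            L2_diff[OF V L2_const]], symmetric]) (simp_all add: finite_measure)
  also have "\<dots> = (\<integral>\<omega>. (h \<bullet> \<phi> (X \<omega>) - \<nu>) * (U \<omega> \<bullet> b + - (\<mu>U \<bullet> b)) \<partial>M)"
    by (simp add: \<nu>[symmetric] inner_diff_left inner_diff_right algebra_simps)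
  also have "\<dots> = (\<integral>\<omega>. (h \<bullet> \<phi> (X \<omega>) - \<nu>) * (U \<omega> \<bullet> b) \<partial>M)"
    by (rule integral_centred_mult_add_const[OF L2_integrable[OF finite_measure a] a_centred
          L2_mult_integrable[OF a L2_inner_left[OF U]]])
  also have "\<dots> = (\<integral>x. (h \<bullet> \<phi> x - \<nu>) * (m x \<bullet> b) \<partial>distr M N X)"
    by (rule cond_mean_integral_mult[where f="\<lambda>x. h \<bullet> \<phi> x - \<nu>", OF M X U m])
      (intro L2_diff L2_inner_right \<phi> L2_const P.finite_measure)
  finally show ?thesis .
qed

lemma ucov_range_subset_if_proj:
  fixes \<phi> :: "'x \<Rightarrow> 'h::{real_inner,banach,second_countable_topology}"
    and U :: "'w \<Rightarrow> 'g::{real_inner,banach,second_countable_topology}"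
  assumes M: "prob_space M" and X: "X \<in> M \<rightarrow>\<^sub>M N" and U: "U \<in> cme_L2 M"
    and m: "cme_cond_mean M X N U m" and \<phi>: "\<phi> \<in> cme_L2 (distr M N X)"
    and proj: "\<And>g. \<exists>q. cme_proj (distr M N X) (cme_rkhs_fun \<phi>) (\<lambda>x. g \<bullet> m x) q
                      \<and> cme_mem (distr M N X) (cme_rkhs_fun \<phi>) q"
  shows "range (cme_ucov M (\<lambda>\<omega>. \<phi> (X \<omega>)) U) \<subseteq> range (cme_ucov M (\<lambda>\<omega>. \<phi> (X \<omega>)) (\<lambda>\<omega>. \<phi> (X \<omega>)))"
proof (rule range_subset_if_inner_eq)
  fix b
  have mL2: "m \<in> cme_L2 (distr M N X)"
    using m unfolding cme_cond_mean_def by simp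
  obtain q v where q: "cme_proj (distr M N X) (cme_rkhs_fun \<phi>) (\<lambda>x. b \<bullet> m x) q"
    and v: "v \<in> cme_rkhs_fun \<phi>" "AE x in distr M N X. q x = v x"
    using proj[of b] unfolding cme_mem_def by blast
  obtain k where k: "v = (\<lambda>x. k \<bullet> \<phi> x)"
    using v(1) by (rule rkhs_fun_obtain)
  have qL2: "q \<in> cme_L2 (distr M N X)"
    using q unfolding cme_proj_def by simp
  have "h \<bullet> cme_ucov M (\<lambda>\<omega>. \<phi> (X \<omega>)) U b = h \<bullet> cme_ucov M (\<lambda>\<omega>. \<phi> (X \<omega>)) (\<lambda>\<omega>. \<phi> (X \<omega>)) k" for h
  proof -
    have "h \<bullet> cme_ucov M (\<lambda>\<omega>. \<phi> (X \<omega>)) U b = (\<integral>x. (h \<bullet> \<phi> x) * (m x \<bullet> b) \<partial>distr M N X)"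
      by (rule inner_ucov_cond_mean[OF M X U m \<phi>])
    also have "\<dots> = (\<integral>x. (h \<bullet> \<phi> x) * q x \<partial>distr M N X)"
      using proj_rkhs_fun_normal_eq[OF q L2_inner_right[OF mL2] \<phi>] by (simp add: inner_commute)
    also have "\<dots> = (\<integral>x. (h \<bullet> \<phi> x) * (k \<bullet> \<phi> x) \<partial>distr M N X)"
      using v(2) unfolding k
      by (intro integral_cong_AE borel_measurable_times L2_measurable L2_inner_right \<phi> qL2)
        (auto elim: eventually_mono)
    also have "\<dots> = h \<bullet> cme_ucov M (\<lambda>\<omega>. \<phi> (X \<omega>)) (\<lambda>\<omega>. \<phi> (X \<omega>)) k"
      using inner_ucov_cond_mean[OF M X L2_comp_distr[OF X \<phi>] cond_mean_comp[OF X \<phi>] \<phi>, of h k]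
      by (simp add: inner_commute)
    finally show ?thesis .
  qed
  then show "\<exists>k. \<forall>h. h \<bullet> cme_ucov M (\<lambda>\<omega>. \<phi> (X \<omega>)) U b = h \<bullet> cme_ucov M (\<lambda>\<omega>. \<phi> (X \<omega>)) (\<lambda>\<omega>. \<phi> (X \<omega>)) k"
    by blast
qed

lemma cov_range_subset_if_projC:
  fixes \<phi> :: "'x \<Rightarrow> 'h::{real_inner,banach,second_countable_topology}"
    and U :: "'w \<Rightarrow> 'g::{real_inner,banach,second_countable_topology}"
  assumes M: "prob_space M" and X: "X \<in> M \<rightarrow>\<^sub>M N" and U: "U \<in> cme_L2 M"
    and m: "cme_cond_mean M X N U m" and \<phi>: "\<phi> \<in> cme_L2 (distr M N X)"
    and proj: "\<And>g. \<exists>q. cme_projC (distr M N X) (cme_rkhs_fun \<phi>) (\<lambda>x. g \<bullet> m x) q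
                      \<and> cme_memC (distr M N X) (cme_rkhs_fun \<phi>) q"
  shows "range (cme_cov M (\<lambda>\<omega>. \<phi> (X \<omega>)) U) \<subseteq> range (cme_cov M (\<lambda>\<omega>. \<phi> (X \<omega>)) (\<lambda>\<omega>. \<phi> (X \<omega>)))"
proof (rule range_subset_if_inner_eq)
  fix b
  interpret P: prob_space "distr M N X"
    using M X by (rule prob_space.prob_space_distr)
  have mL2: "m \<in> cme_L2 (distr M N X)"
    using m unfolding cme_cond_mean_def by simp
  obtain q v c where q: "cme_projC (distr M N X) (cme_rkhs_fun \<phi>) (\<lambda>x. b \<bullet> m x) q"
    and v: "v \<in> cme_rkhs_fun \<phi>" "AE x in distr M N X. q x = v x + c"
    using proj[of b] unfolding cme_memC_def by blast
  obtain k where k: "v = (\<lambda>x. k \<bullet> \<phi> x)"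
    using v(1) by (rule rkhs_fun_obtain)
  have qL2: "q \<in> cme_L2 (distr M N X)"
    using q unfolding cme_projC_def by simp
  have "h \<bullet> cme_cov M (\<lambda>\<omega>. \<phi> (X \<omega>)) U b = h \<bullet> cme_cov M (\<lambda>\<omega>. \<phi> (X \<omega>)) (\<lambda>\<omega>. \<phi> (X \<omega>)) k" for h
  proof -
    define \<nu> where "\<nu> = (\<integral>y. h \<bullet> \<phi> y \<partial>distr M N X)"
    have a: "(\<lambda>x. h \<bullet> \<phi> x - \<nu>) \<in> cme_L2 (distr M N X)"
      by (intro L2_diff L2_inner_right \<phi> L2_const P.finite_measure)
    have a_centred: "(\<integral>x. h \<bullet> \<phi> x - \<nu> \<partial>distr M N X) = 0"
      using L2_integrable[OF P.finite_measure \<phi>] unfolding \<nu>_def by (simp add: P.prob_space[simplified])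
    have "h \<bullet> cme_cov M (\<lambda>\<omega>. \<phi> (X \<omega>)) U b = (\<integral>x. (h \<bullet> \<phi> x - \<nu>) * (m x \<bullet> b) \<partial>distr M N X)"
      unfolding \<nu>_def by (rule inner_cov_cond_mean[OF M X U m \<phi>])
    also have "\<dots> = (\<integral>x. (h \<bullet> \<phi> x - \<nu>) * q x \<partial>distr M N X)"
      using projC_rkhs_fun_normal_eq[OF q P.prob_space_axioms L2_inner_right[OF mL2] \<phi>]
      unfolding \<nu>_def by (simp add: inner_commute)
    also have "\<dots> = (\<integral>x. (h \<bullet> \<phi> x - \<nu>) * (\<phi> x \<bullet> k) \<partial>distr M N X)"
      using v(2) unfolding k
      by (intro integral_centred_mult_cong_AE[OF P.finite_measure a a_centred qL2 L2_inner_left[OF \<phi>]])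
        (simp add: inner_commute)
    also have "\<dots> = h \<bullet> cme_cov M (\<lambda>\<omega>. \<phi> (X \<omega>)) (\<lambda>\<omega>. \<phi> (X \<omega>)) k"
      unfolding \<nu>_def
      by (rule inner_cov_cond_mean[OF M X L2_comp_distr[OF X \<phi>] cond_mean_comp[OF X \<phi>] \<phi>, symmetric])
    finally show ?thesis .
  qed
  then show "\<exists>k. \<forall>h. h \<bullet> cme_cov M (\<lambda>\<omega>. \<phi> (X \<omega>)) U b = h \<bullet> cme_cov M (\<lambda>\<omega>. \<phi> (X \<omega>)) (\<lambda>\<omega>. \<phi> (X \<omega>)) k"
    by blast
qed

theorem mainTheorem15:
  fixes M :: "'w measure" and MX :: "'x measure" and MY :: "'y measure"
    and X :: "'w \<Rightarrow> 'x" and Y :: "'w \<Rightarrow> 'y"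
    and k :: "'x \<Rightarrow> 'x \<Rightarrow> real" and l :: "'y \<Rightarrow> 'y \<Rightarrow> real"
    and \<phi> :: "'x \<Rightarrow> 'h::{real_inner,banach,second_countable_topology}"
    and \<psi> :: "'y \<Rightarrow> 'g::{real_inner,banach,second_countable_topology}"
    and m :: "'x \<Rightarrow> 'g"
  assumes prob: "prob_space M"
    and X_meas: "X \<in> M \<rightarrow>\<^sub>M MX" and Y_meas: "Y \<in> M \<rightarrow>\<^sub>M MY"
    and k_meas: "(\<lambda>(x, x'). k x x') \<in> borel_measurable (MX \<Otimes>\<^sub>M MX)"
    and l_meas: "(\<lambda>(y, y'). l y y') \<in> borel_measurable (MY \<Otimes>\<^sub>M MY)"
    and k_sym: "\<forall>x\<in>space MX. \<forall>x'\<in>space MX. k x x' = k x' x"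
    and l_sym: "\<forall>y\<in>space MY. \<forall>y'\<in>space MY. l y y' = l y' y"
    and k_pd: "\<forall>xs c. set xs \<subseteq> space MX \<longrightarrow>
                 (\<Sum>i<length xs. \<Sum>j<length xs. c i * c j * k (xs ! i) (xs ! j)) \<ge> 0"
    and l_pd: "\<forall>ys c. set ys \<subseteq> space MY \<longrightarrow>
                 (\<Sum>i<length ys. \<Sum>j<length ys. c i * c j * l (ys ! i) (ys ! j)) \<ge> 0"
    and k_rep: "\<forall>x\<in>space MX. \<forall>x'\<in>space MX. \<phi> x \<bullet> \<phi> x' = k x x'"
    and l_rep: "\<forall>y\<in>space MY. \<forall>y'\<in>space MY. \<psi> y \<bullet> \<psi> y' = l y y'"
    and H_rkhs: "\<forall>h. (\<forall>x\<in>space MX. h \<bullet> \<phi> x = 0) \<longrightarrow> h = 0"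
    and G_rkhs: "\<forall>g. (\<forall>y\<in>space MY. g \<bullet> \<psi> y = 0) \<longrightarrow> g = 0"
    and \<phi>_meas: "\<phi> \<in> borel_measurable MX" and \<psi>_meas: "\<psi> \<in> borel_measurable MY"
    and \<phi>_inj: "inj_on \<phi> (space MX)"
    and V_L2: "integrable M (\<lambda>\<omega>. (norm (\<phi> (X \<omega>)))\<^sup>2)"
    and U_L2: "integrable M (\<lambda>\<omega>. (norm (\<psi> (Y \<omega>)))\<^sup>2)"
    and H_ae: "\<forall>h. (AE x in distr M MX X. h \<bullet> \<phi> x = 0) \<longrightarrow> h = 0"
    and m_cm: "cme_cond_mean M X MX (\<lambda>\<omega>. \<psi> (Y \<omega>)) m"
  shows
    "(cme_mem (distr M MX X) (cme_tensor \<phi>) m \<longrightarrow>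
        (\<forall>g. cme_mem (distr M MX X) (cme_rkhs_fun \<phi>) (\<lambda>x. g \<bullet> m x)))
   \<and> (cme_memC (distr M MX X) (cme_tensor \<phi>) m \<longrightarrow>
        (\<forall>g. cme_memC (distr M MX X) (cme_rkhs_fun \<phi>) (\<lambda>x. g \<bullet> m x)))
   \<and> ((\<exists>p. cme_projC (distr M MX X) (cme_tensor \<phi>) m p \<and> cme_memC (distr M MX X) (cme_tensor \<phi>) p) \<longrightarrow>
        (\<forall>g. \<exists>p. cme_projC (distr M MX X) (cme_rkhs_fun \<phi>) (\<lambda>x. g \<bullet> m x) p
                  \<and> cme_memC (distr M MX X) (cme_rkhs_fun \<phi>) p))
   \<and> ((\<exists>p. cme_proj (distr M MX X) (cme_tensor \<phi>) m p \<and> cme_mem (distr M MX X) (cme_tensor \<phi>) p) \<longrightarrow>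
        (\<forall>g. \<exists>p. cme_proj (distr M MX X) (cme_rkhs_fun \<phi>) (\<lambda>x. g \<bullet> m x) p
                  \<and> cme_mem (distr M MX X) (cme_rkhs_fun \<phi>) p))
   \<and> (cme_closure (distr M MX X) (cme_tensor \<phi>) m \<longrightarrow>
        (\<forall>g. cme_closure (distr M MX X) (cme_rkhs_fun \<phi>) (\<lambda>x. g \<bullet> m x)))
   \<and> (cme_closureC (distr M MX X) (cme_tensor \<phi>) m \<longrightarrow>
        (\<forall>g. cme_closureC (distr M MX X) (cme_rkhs_fun \<phi>) (\<lambda>x. g \<bullet> m x)))
   \<and> ((\<exists>p. cme_projC (distr M MX X) (cme_tensor \<phi>) m p \<and> cme_memC (distr M MX X) (cme_tensor \<phi>) p) \<longrightarrow>
        range (cme_cov M (\<lambda>\<omega>. \<phi> (X \<omega>)) (\<lambda>\<omega>. \<psi> (Y \<omega>))) \<subseteq> range (cme_cov M (\<lambda>\<omega>. \<phi> (X \<omega>)) (\<lambda>\<omega>. \<phi> (X \<omega>))))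
   \<and> ((\<exists>p. cme_proj (distr M MX X) (cme_tensor \<phi>) m p \<and> cme_mem (distr M MX X) (cme_tensor \<phi>) p) \<longrightarrow>
        range (cme_ucov M (\<lambda>\<omega>. \<phi> (X \<omega>)) (\<lambda>\<omega>. \<psi> (Y \<omega>))) \<subseteq> range (cme_ucov M (\<lambda>\<omega>. \<phi> (X \<omega>)) (\<lambda>\<omega>. \<phi> (X \<omega>))))"
proof -
  let ?P = "distr M MX X"
  interpret P: prob_space ?P
    using prob X_meas by (rule prob_space.prob_space_distr)
  have m: "m \<in> cme_L2 ?P"
    using m_cm unfolding cme_cond_mean_def by simp
  have U: "(\<lambda>\<omega>. \<psi> (Y \<omega>)) \<in> cme_L2 M"
    unfolding cme_L2_def using measurable_compose[OF Y_meas \<psi>_meas] U_L2 by simp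
  have "(\<lambda>\<omega>. \<phi> (X \<omega>)) \<in> cme_L2 M"
    unfolding cme_L2_def using measurable_compose[OF X_meas \<phi>_meas] V_L2 by simp
  then have \<phi>: "\<phi> \<in> cme_L2 ?P"
    using L2_distr_iff[OF X_meas \<phi>_meas] by simp
  have \<phi>_meas': "\<phi> \<in> borel_measurable ?P"
    using \<phi>_meas by simp
  have proj: "\<exists>q. cme_proj ?P (cme_rkhs_fun \<phi>) (\<lambda>x. g \<bullet> m x) q \<and> cme_mem ?P (cme_rkhs_fun \<phi>) q"
    if "cme_proj ?P (cme_tensor \<phi>) m p" "cme_mem ?P (cme_tensor \<phi>) p" for p g
    using proj_rkhs_fun_if_proj_tensor[OF that \<phi>_meas'] mem_rkhs_fun_if_mem_tensor[OF that(2)] by blast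
  have projC: "\<exists>q. cme_projC ?P (cme_rkhs_fun \<phi>) (\<lambda>x. g \<bullet> m x) q \<and> cme_memC ?P (cme_rkhs_fun \<phi>) q"
    if "cme_projC ?P (cme_tensor \<phi>) m p" "cme_memC ?P (cme_tensor \<phi>) p" for p g
    using projC_rkhs_fun_if_projC_tensor[OF that P.finite_measure m \<phi>] memC_rkhs_fun_if_memC_tensor[OF that(2)]
    by blast
  show ?thesis
    using mem_rkhs_fun_if_mem_tensor memC_rkhs_fun_if_memC_tensor proj projC
      closure_rkhs_fun_if_closure_tensor[OF _ L2_measurable[OF m] \<phi>_meas']
      closureC_rkhs_fun_if_closureC_tensor[OF _ L2_integrable[OF P.finite_measure m] L2_integrable[OF P.finite_measure \<phi>]]
      ucov_range_subset_if_proj[OF prob X_meas U m_cm \<phi>] cov_range_subset_if_projC[OF prob X_meas U m_cm \<phi>]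
    by blast
qed

end
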